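(* Let $\Gamma$ be any context of $\lambda\mathsf{HOL}$ (possibly extended by constants and additional conversion rules) in which there are a type $A:\square$ and terms $\mathsf{intro}:T\,A\to A$ and $\mathsf{match}:A\to T\,A$ such that, for every $u:T\,A$, the term $\mathsf{match}\,(\mathsf{intro}\,u)$ is judgementally equal to $u$ (i.e. $T\,A$ is a judgemental retract of $A$). Then there is a term of type $\perp$ in $\Gamma$. In other words, in $\lambda\mathsf{HOL}$ one cannot have a type $A$ such that $\mathsf{Pow}\,(\mathsf{Pow}\,A)$ is a judgemental retract of $A$ without the system becoming inconsistent.
   Context: $\lambda\mathsf{HOL}$ (minimal higher-order logic) is the pure type system with sorts $*,\square,\Delta$, axioms $*:\square$ and $\square:\Delta$, and rules $( *,* )$, $(\square,\square)$, $(\square,* )$; judgemental equality is $\beta$-conversion. Define $\mathsf{Pow}:\square\to\square$ by $\mathsf{Pow}\,X = X\to *$ and $T:\square\to\square$ by $T\,X=\mathsf{Pow}(\mathsf{Pow}\,X)$. Define $\perp:*$ by $\perp=\forall_{p:*}\,p$ and $\neg p = p\to\perp$. *)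

theory Defs
  imports Main
begin

text \<open>Deep embedding of the pure type system lambda-HOL with de Bruijn indices.
  Constants of an extended context are modelled as declared variables of the
  context; additional conversion rules are modelled by an arbitrary relation R on
  terms, whose compatible closure together with beta generates judgemental equality.\<close>

datatype sort = Star | Box | Tri

datatype trm = Srt sort | Var nat | App trm trm | Lam trm trm | Pi trm trm

fun lift :: "nat \<Rightarrow> nat \<Rightarrow> trm \<Rightarrow> trm" where
  "lift k n (Srt s) = Srt s"
| "lift k n (Var i) = (if i < k then Var i else Var (i + n))"
| "lift k n (App t u) = App (lift k n t) (lift k n u)"
| "lift k n (Lam A b) = Lam (lift k n A) (lift (Suc k) n b)"
| "lift k n (Pi A B) = Pi (lift k n A) (lift (Suc k) n B)"

fun subst :: "trm \<Rightarrow> nat \<Rightarrow> trm \<Rightarrow> trm" where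
  "subst (Srt s') k s = Srt s'"
| "subst (Var i) k s = (if i < k then Var i else if i = k then lift 0 k s else Var (i - 1))"
| "subst (App t u) k s = App (subst t k s) (subst u k s)"
| "subst (Lam A b) k s = Lam (subst A k s) (subst b (Suc k) s)"
| "subst (Pi A B) k s = Pi (subst A k s) (subst B (Suc k) s)"

definition ax :: "sort \<Rightarrow> sort \<Rightarrow> bool" where
  "ax s1 s2 \<longleftrightarrow> (s1 = Star \<and> s2 = Box) \<or> (s1 = Box \<and> s2 = Tri)"

definition rl :: "sort \<Rightarrow> sort \<Rightarrow> bool" where
  "rl s1 s2 \<longleftrightarrow> (s1, s2) \<in> {(Star, Star), (Box, Box), (Box, Star)}"

inductive step :: "(trm \<Rightarrow> trm \<Rightarrow> bool) \<Rightarrow> trm \<Rightarrow> trm \<Rightarrow> bool" for R where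
  beta: "step R (App (Lam A b) a) (subst b 0 a)"
| extra: "R t u \<Longrightarrow> step R t u"
| appL: "step R t t' \<Longrightarrow> step R (App t u) (App t' u)"
| appR: "step R u u' \<Longrightarrow> step R (App t u) (App t u')"
| lamL: "step R A A' \<Longrightarrow> step R (Lam A b) (Lam A' b)"
| lamR: "step R b b' \<Longrightarrow> step R (Lam A b) (Lam A b')"
| piL: "step R A A' \<Longrightarrow> step R (Pi A B) (Pi A' B)"
| piR: "step R B B' \<Longrightarrow> step R (Pi A B) (Pi A B')"

definition conv :: "(trm \<Rightarrow> trm \<Rightarrow> bool) \<Rightarrow> trm \<Rightarrow> trm \<Rightarrow> bool" where
  "conv R = equivclp (step R)"

text \<open>Typing judgement \<open>hastype R \<Gamma> a A\<close>; the head of the list \<Gamma> is the type of Var 0.\<close>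
inductive hastype :: "(trm \<Rightarrow> trm \<Rightarrow> bool) \<Rightarrow> trm list \<Rightarrow> trm \<Rightarrow> trm \<Rightarrow> bool" for R where
  axiom: "ax s1 s2 \<Longrightarrow> hastype R [] (Srt s1) (Srt s2)"
| start: "hastype R \<Gamma> A (Srt s) \<Longrightarrow> hastype R (A # \<Gamma>) (Var 0) (lift 0 1 A)"
| weak: "hastype R \<Gamma> a B \<Longrightarrow> hastype R \<Gamma> C (Srt s) \<Longrightarrow> hastype R (C # \<Gamma>) (lift 0 1 a) (lift 0 1 B)"
| prod: "hastype R \<Gamma> A (Srt s1) \<Longrightarrow> hastype R (A # \<Gamma>) B (Srt s2) \<Longrightarrow> rl s1 s2 \<Longrightarrow>
         hastype R \<Gamma> (Pi A B) (Srt s2)"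
| app: "hastype R \<Gamma> f (Pi A B) \<Longrightarrow> hastype R \<Gamma> a A \<Longrightarrow> hastype R \<Gamma> (App f a) (subst B 0 a)"
| abs: "hastype R (A # \<Gamma>) b B \<Longrightarrow> hastype R \<Gamma> (Pi A B) (Srt s) \<Longrightarrow> hastype R \<Gamma> (Lam A b) (Pi A B)"
| cnv: "hastype R \<Gamma> a A \<Longrightarrow> hastype R \<Gamma> B (Srt s) \<Longrightarrow> conv R A B \<Longrightarrow> hastype R \<Gamma> a B"

definition arrow :: "trm \<Rightarrow> trm \<Rightarrow> trm" where
  "arrow A B = Pi A (lift 0 1 B)"

definition Pow :: "trm \<Rightarrow> trm" where
  "Pow X = arrow X (Srt Star)"

definition TT :: "trm \<Rightarrow> trm" where
  "TT X = Pow (Pow X)"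

definition bot :: trm where
  "bot = Pi (Srt Star) (Var 0)"

end

theory Submission
  imports Defs
begin

text \<open>A Russell-style paradox. Read \<open>a : A\<close> as the family of predicates \<open>match a\<close>,
  and let \<open>b \<in> a\<close> mean that \<open>match a\<close> holds of the Leibniz singleton \<open>{b}\<close>.
  Let \<open>russell\<close> be the predicate \<open>\<lambda>x. \<not> x \<in> x\<close> and \<open>diag = intro U\<close>, where \<open>U\<close>
  is the family of all predicates contained in \<open>russell\<close>. Since \<open>match (intro U)\<close>
  converts to \<open>U\<close>, the proposition \<open>diag \<in> diag\<close> converts to \<open>{diag} \<subseteq> russell\<close>.
  Instantiating this inclusion at \<open>diag\<close> refutes \<open>diag \<in> diag\<close>; transporting that
  refutation along Leibniz equality proves \<open>{diag} \<subseteq> russell\<close>. Both proofs are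
  \<open>\<lambda>HOL\<close> terms, so applying one to the other inhabits \<open>\<bottom>\<close>.\<close>

lemma lift_0 [simp]: "lift k 0 t = t"
  by (induction t arbitrary: k) auto

lemma lift_lift [simp]: "i \<le> k \<Longrightarrow> k \<le> i + m \<Longrightarrow> lift k n (lift i m t) = lift i (m + n) t"
  by (induction t arbitrary: i k) auto

lemma lift_lift_comm: "i \<le> k \<Longrightarrow> lift (Suc k) n (lift i 1 t) = lift i 1 (lift k n t)"
  by (induction t arbitrary: i k) auto

lemma subst_lift [simp]: "i \<le> k \<Longrightarrow> k < i + m \<Longrightarrow> subst (lift i m t) k s = lift i (m - 1) t"
  by (induction t arbitrary: i k) auto

lemma subst_lift_comm: "i \<le> k \<Longrightarrow> subst (lift i 1 t) (Suc k) s = lift i 1 (subst t k s)"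
  by (induction t arbitrary: i k) auto

text \<open>Stated with \<open>Suc 0\<close>, the form the simplifier gives the index \<open>1\<close>,
  so that they fire as simp rules.\<close>

lemma lift_lift1_comm [simp]: "lift (Suc k) n (lift 0 (Suc 0) t) = lift 0 (Suc 0) (lift k n t)"
  using lift_lift_comm[of 0 k n t] by simp

lemma subst_lift1_comm [simp]: "subst (lift 0 (Suc 0) t) (Suc k) s = lift 0 (Suc 0) (subst t k s)"
  using subst_lift_comm[of 0 k t s] by simp

lemma lift_arrow [simp]: "lift k n (arrow X Y) = arrow (lift k n X) (lift k n Y)"
  by (simp add: arrow_def lift_lift_comm)

lemma subst_arrow [simp]: "subst (arrow X Y) k s = arrow (subst X k s) (subst Y k s)"
  by (simp add: arrow_def subst_lift_comm)

lemma lift_bot [simp]: "lift k n bot = bot"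
  by (simp add: bot_def)

lemma subst_bot [simp]: "subst bot k s = bot"
  by (simp add: bot_def)

lemma lift_Pow [simp]: "lift k n (Pow X) = Pow (lift k n X)"
  by (simp add: Pow_def)

lemma subst_Pow [simp]: "subst (Pow X) k s = Pow (subst X k s)"
  by (simp add: Pow_def)

lemma lift_TT [simp]: "lift k n (TT X) = TT (lift k n X)"
  by (simp add: TT_def)

definition Neg :: "trm \<Rightarrow> trm" where
  "Neg Y = arrow Y bot"

definition Leibniz_eq :: "trm \<Rightarrow> trm \<Rightarrow> trm \<Rightarrow> trm" where
  "Leibniz_eq X b x = Pi (Pow X) (arrow (App (Var 0) (lift 0 1 b)) (App (Var 0) (lift 0 1 x)))"

definition Leibniz_refl :: "trm \<Rightarrow> trm \<Rightarrow> trm" where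
  "Leibniz_refl X b = Lam (Pow X) (Lam (App (Var 0) (lift 0 1 b)) (Var 0))"

definition Sing :: "trm \<Rightarrow> trm \<Rightarrow> trm" where
  "Sing X b = Lam X (Leibniz_eq (lift 0 1 X) (lift 0 1 b) (Var 0))"

definition Incl :: "trm \<Rightarrow> trm \<Rightarrow> trm \<Rightarrow> trm" where
  "Incl X P P' = Pi X (arrow (App (lift 0 1 P) (Var 0)) (App (lift 0 1 P') (Var 0)))"

definition Mem :: "trm \<Rightarrow> trm \<Rightarrow> trm \<Rightarrow> trm \<Rightarrow> trm" where
  "Mem X M b a = App (App M a) (Sing X b)"

lemma lift_Neg [simp]: "lift k n (Neg Y) = Neg (lift k n Y)"
  by (simp add: Neg_def)

lemma subst_Neg [simp]: "subst (Neg Y) k s = Neg (subst Y k s)"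
  by (simp add: Neg_def)

lemma lift_Leibniz_eq [simp]:
  "lift k n (Leibniz_eq X b x) = Leibniz_eq (lift k n X) (lift k n b) (lift k n x)"
  by (simp add: Leibniz_eq_def lift_lift_comm)

lemma subst_Leibniz_eq [simp]:
  "subst (Leibniz_eq X b x) k s = Leibniz_eq (subst X k s) (subst b k s) (subst x k s)"
  by (simp add: Leibniz_eq_def subst_lift_comm)

lemma lift_Sing [simp]: "lift k n (Sing X b) = Sing (lift k n X) (lift k n b)"
  by (simp add: Sing_def lift_lift_comm)

lemma subst_Sing [simp]: "subst (Sing X b) k s = Sing (subst X k s) (subst b k s)"
  by (simp add: Sing_def subst_lift_comm)

lemma lift_Incl [simp]: "lift k n (Incl X P P') = Incl (lift k n X) (lift k n P) (lift k n P')"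
  by (simp add: Incl_def lift_lift_comm)

lemma subst_Incl [simp]: "subst (Incl X P P') k s = Incl (subst X k s) (subst P k s) (subst P' k s)"
  by (simp add: Incl_def subst_lift_comm)

lemma lift_Mem [simp]: "lift k n (Mem X M b a) = Mem (lift k n X) (lift k n M) (lift k n b) (lift k n a)"
  by (simp add: Mem_def)

lemma subst_Mem [simp]:
  "subst (Mem X M b a) k s = Mem (subst X k s) (subst M k s) (subst b k s) (subst a k s)"
  by (simp add: Mem_def)

lemma conv_sym: "conv R t u \<Longrightarrow> conv R u t"
  by (simp add: conv_def equivclp_sym)

lemma conv_trans [trans]: "conv R t u \<Longrightarrow> conv R u v \<Longrightarrow> conv R t v"
  unfolding conv_def by (meson transp_equivclp transpD)

lemma conv_step: "step R t u \<Longrightarrow> conv R t u"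
  unfolding conv_def equivclp_def by (simp add: r_into_rtranclp)

lemma conv_beta: "subst b 0 a = c \<Longrightarrow> conv R (App (Lam X b) a) c"
  using conv_step step.beta by metis

lemma conv_cong:
  assumes "\<And>x y. step R x y \<Longrightarrow> step R (f x) (f y)" and "conv R t u"
  shows "conv R (f t) (f u)"
  using assms(2) unfolding conv_def
proof (induction rule: equivclp_induct)
  case (step y z)
  then have "equivclp (step R) (f y) (f z)"
    using assms(1) conv_step conv_sym unfolding conv_def by blast
  with step.IH show ?case by (meson transp_equivclp transpD)
qed simp

lemma conv_AppL: "conv R t u \<Longrightarrow> conv R (App t a) (App u a)"
  using conv_cong[of R "\<lambda>x. App x a"] step.appL by blast

lemma conv_Neg: "conv R t u \<Longrightarrow> conv R (Neg t) (Neg u)"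
  using conv_cong[of R "\<lambda>x. Neg x"] step.piL by (simp add: Neg_def arrow_def)

lemma hastype_Star_Box: "hastype R D a B \<Longrightarrow> hastype R D (Srt Star) (Srt Box)"
proof (induction rule: hastype.induct)
  case (axiom s1 s2)
  then show ?case by (simp add: hastype.axiom ax_def)
qed (use hastype.weak in fastforce)+

lemma hastype_arrow:
  "hastype R D X (Srt s1) \<Longrightarrow> hastype R D Y (Srt s2) \<Longrightarrow> rl s1 s2 \<Longrightarrow>
   hastype R D (arrow X Y) (Srt s2)"
  unfolding arrow_def using hastype.prod hastype.weak by fastforce

lemma hastype_app_arrow: "hastype R D f (arrow X Y) \<Longrightarrow> hastype R D a X \<Longrightarrow> hastype R D (App f a) Y"
  unfolding arrow_def using hastype.app by fastforce

lemma hastype_lam_arrow: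
  "hastype R (X # D) b (lift 0 1 Y) \<Longrightarrow> hastype R D (arrow X Y) (Srt s) \<Longrightarrow>
   hastype R D (Lam X b) (arrow X Y)"
  unfolding arrow_def by (rule hastype.abs)

lemma hastype_bot: "hastype R D (Srt Star) (Srt Box) \<Longrightarrow> hastype R D bot (Srt Star)"
  unfolding bot_def using hastype.prod hastype.start by (fastforce simp: rl_def)

lemma hastype_Neg: "hastype R D Y (Srt Star) \<Longrightarrow> hastype R D (Neg Y) (Srt Star)"
  unfolding Neg_def using hastype_arrow hastype_bot hastype_Star_Box by (fastforce simp: rl_def)

lemma hastype_Pow: "hastype R D X (Srt Box) \<Longrightarrow> hastype R D (Pow X) (Srt Box)"
  unfolding Pow_def using hastype_Star_Box hastype_arrow by (fastforce simp: rl_def)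

lemma hastype_weak_Srt:
  "hastype R D X (Srt s) \<Longrightarrow> hastype R D C (Srt s') \<Longrightarrow> hastype R (C # D) (lift 0 1 X) (Srt s)"
  using hastype.weak by fastforce

lemma hastype_start_Pow:
  "hastype R D (Pow X) (Srt s) \<Longrightarrow> hastype R (Pow X # D) (Var 0) (Pow (lift 0 1 X))"
  using hastype.start by fastforce

lemma hastype_weak_Pow:
  "hastype R D P (Pow X) \<Longrightarrow> hastype R D C (Srt s) \<Longrightarrow>
   hastype R (C # D) (lift 0 1 P) (Pow (lift 0 1 X))"
  using hastype.weak by fastforce

lemma hastype_app_Pow:
  "hastype R D P (Pow X) \<Longrightarrow> hastype R D a X \<Longrightarrow> hastype R D (App P a) (Srt Star)"
  unfolding Pow_def by (rule hastype_app_arrow)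

lemma hastype_lam_Pow:
  assumes "hastype R D X (Srt Box)" and "hastype R (X # D) b (Srt Star)"
  shows "hastype R D (Lam X b) (Pow X)"
  using hastype_lam_arrow[of R X D b "Srt Star"] assms hastype_Pow[OF assms(1)] by (simp add: Pow_def)

lemma hastype_Leibniz_eq:
  assumes X: "hastype R D X (Srt Box)" and b: "hastype R D b X" and x: "hastype R D x X"
  shows "hastype R D (Leibniz_eq X b x) (Srt Star)"
proof -
  have PX: "hastype R D (Pow X) (Srt Box)" using hastype_Pow[OF X] .
  have "hastype R (Pow X # D) (App (Var 0) (lift 0 1 c)) (Srt Star)" if "hastype R D c X" for c
    using hastype_app_Pow[OF hastype_start_Pow[OF PX] hastype.weak[OF that PX]] .
  then have "hastype R (Pow X # D) (arrow (App (Var 0) (lift 0 1 b)) (App (Var 0) (lift 0 1 x))) (Srt Star)"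
    using hastype_arrow b x by (fastforce simp: rl_def)
  then show ?thesis
    unfolding Leibniz_eq_def using hastype.prod[OF PX] by (fastforce simp: rl_def)
qed

lemma hastype_Leibniz_refl:
  assumes X: "hastype R D X (Srt Box)" and b: "hastype R D b X"
  shows "hastype R D (Leibniz_refl X b) (Leibniz_eq X b b)"
proof -
  have PX: "hastype R D (Pow X) (Srt Box)" using hastype_Pow[OF X] .
  have Pb: "hastype R (Pow X # D) (App (Var 0) (lift 0 1 b)) (Srt Star)"
    using hastype_app_Pow[OF hastype_start_Pow[OF PX] hastype.weak[OF b PX]] .
  have "hastype R (Pow X # D) (Lam (App (Var 0) (lift 0 1 b)) (Var 0))
          (arrow (App (Var 0) (lift 0 1 b)) (App (Var 0) (lift 0 1 b)))"
    using hastype_lam_arrow[OF hastype.start[OF Pb]] hastype_arrow[OF Pb Pb] by (simp add: rl_def)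
  then show ?thesis
    unfolding Leibniz_refl_def Leibniz_eq_def
    by (rule hastype.abs) (use hastype_Leibniz_eq[OF X b b] in \<open>simp add: Leibniz_eq_def\<close>)
qed

lemma hastype_Leibniz_eq_elim:
  assumes "hastype R D e (Leibniz_eq X b x)" and "hastype R D P (Pow X)"
  shows "hastype R D (App e P) (arrow (App P b) (App P x))"
  using hastype.app[OF assms[unfolded Leibniz_eq_def]] by simp

lemma hastype_Sing:
  assumes X: "hastype R D X (Srt Box)" and b: "hastype R D b X"
  shows "hastype R D (Sing X b) (Pow X)"
  unfolding Sing_def
  using hastype_lam_Pow[OF X hastype_Leibniz_eq[OF hastype_weak_Srt[OF X X] hastype.weak[OF b X]
        hastype.start[OF X]]] .

lemma conv_Sing_app: "conv R (App (Sing X b) a) (Leibniz_eq X b a)"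
  unfolding Sing_def by (rule conv_beta) simp

lemma hastype_Incl_body:
  assumes X: "hastype R D X (Srt Box)" and P: "hastype R D P (Pow X)" and P': "hastype R D P' (Pow X)"
  shows "hastype R (X # D) (arrow (App (lift 0 1 P) (Var 0)) (App (lift 0 1 P') (Var 0))) (Srt Star)"
proof -
  have "hastype R (X # D) (App (lift 0 1 Q) (Var 0)) (Srt Star)" if "hastype R D Q (Pow X)" for Q
    using hastype_app_Pow[OF hastype_weak_Pow[OF that X] hastype.start[OF X]] .
  then show ?thesis
    using hastype_arrow P P' by (fastforce simp: rl_def)
qed

lemma hastype_Incl:
  assumes "hastype R D X (Srt Box)" and "hastype R D P (Pow X)" and "hastype R D P' (Pow X)"
  shows "hastype R D (Incl X P P') (Srt Star)"
  unfolding Incl_def using hastype.prod[OF assms(1) hastype_Incl_body[OF assms]] by (simp add: rl_def)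

lemma hastype_Incl_intro:
  assumes X: "hastype R D X (Srt Box)" and P: "hastype R D P (Pow X)" and P': "hastype R D P' (Pow X)"
    and b: "hastype R (App (lift 0 1 P) (Var 0) # X # D) b (App (lift 0 2 P') (Var 1))"
  shows "hastype R D (Lam X (Lam (App (lift 0 1 P) (Var 0)) b)) (Incl X P P')"
proof -
  have "hastype R (App (lift 0 1 P) (Var 0) # X # D) b (lift 0 1 (App (lift 0 1 P') (Var 0)))"
    using b by (simp add: numeral_eq_Suc)
  then have "hastype R (X # D) (Lam (App (lift 0 1 P) (Var 0)) b)
               (arrow (App (lift 0 1 P) (Var 0)) (App (lift 0 1 P') (Var 0)))"
    using hastype_lam_arrow hastype_Incl_body[OF X P P'] by blast
  then show ?thesis
    unfolding Incl_def by (rule hastype.abs) (use hastype_Incl[OF X P P'] in \<open>simp add: Incl_def\<close>)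
qed

lemma hastype_Incl_elim:
  assumes "hastype R D h (Incl X P P')" and "hastype R D a X"
  shows "hastype R D (App h a) (arrow (App P a) (App P' a))"
  using hastype.app[OF assms[unfolded Incl_def]] by simp

lemma hastype_Mem:
  assumes X: "hastype R D X (Srt Box)" and M: "hastype R D M (arrow X (TT X))"
    and b: "hastype R D b X" and a: "hastype R D a X"
  shows "hastype R D (Mem X M b a) (Srt Star)"
  unfolding Mem_def
  using hastype_app_Pow[OF hastype_app_arrow[OF M[unfolded TT_def] a] hastype_Sing[OF X b]] .

locale Pow_Pow_retract =
  fixes R :: "trm \<Rightarrow> trm \<Rightarrow> bool" and \<Gamma> :: "trm list" and A intro match :: trm
  assumes A_type: "hastype R \<Gamma> A (Srt Box)"
    and intro_type: "hastype R \<Gamma> intro (arrow (TT A) A)"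
    and match_type: "hastype R \<Gamma> match (arrow A (TT A))"
    and match_intro: "\<And>\<Delta> u. hastype R (\<Delta> @ \<Gamma>) u (lift 0 (length \<Delta>) (TT A)) \<Longrightarrow>
           conv R (App (lift 0 (length \<Delta>) match) (App (lift 0 (length \<Delta>) intro) u)) u"
begin

definition russell :: trm where
  "russell = Lam A (Neg (Mem (lift 0 1 A) (lift 0 1 match) (Var 0) (Var 0)))"

definition below_russell :: trm where
  "below_russell = Lam (Pow A) (Incl (lift 0 1 A) (Var 0) (lift 0 1 russell))"

definition diag :: trm where
  "diag = App intro below_russell"

abbreviation self_mem :: trm where
  "self_mem \<equiv> Mem A match diag diag"

abbreviation self_incl :: trm where
  "self_incl \<equiv> Incl A (Sing A diag) russell"

lemma russell_type: "hastype R \<Gamma> russell (Pow A)"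
proof -
  have A1: "hastype R (A # \<Gamma>) (lift 0 1 A) (Srt Box)"
    using hastype_weak_Srt[OF A_type A_type] .
  have M1: "hastype R (A # \<Gamma>) (lift 0 1 match) (arrow (lift 0 1 A) (TT (lift 0 1 A)))"
    using hastype.weak[OF match_type A_type] by simp
  show ?thesis
    unfolding russell_def
    using hastype_lam_Pow[OF A_type
        hastype_Neg[OF hastype_Mem[OF A1 M1 hastype.start[OF A_type] hastype.start[OF A_type]]]] .
qed

lemma conv_russell_app: "conv R (App (lift 0 n russell) a) (Neg (Mem (lift 0 n A) (lift 0 n match) a a))"
  unfolding russell_def by simp (rule conv_beta, simp)

lemma below_russell_type: "hastype R \<Gamma> below_russell (TT A)"
proof -
  have PA: "hastype R \<Gamma> (Pow A) (Srt Box)" using hastype_Pow[OF A_type] .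
  show ?thesis
    unfolding below_russell_def TT_def
    using hastype_lam_Pow[OF PA hastype_Incl[OF hastype_weak_Srt[OF A_type PA] hastype_start_Pow[OF PA]
        hastype_weak_Pow[OF russell_type PA]]] .
qed

lemma diag_type: "hastype R \<Gamma> diag A"
  unfolding diag_def using hastype_app_arrow[OF intro_type below_russell_type] .

text \<open>\<open>R\<close> need not be stable under \<open>lift\<close>, so in an extended context the conversion comes from
  instantiating \<open>match_intro\<close> at that context, not from lifting the conversion in \<open>\<Gamma>\<close>.\<close>

lemma conv_self_mem:
  assumes "hastype R (\<Delta> @ \<Gamma>) (lift 0 (length \<Delta>) below_russell) (lift 0 (length \<Delta>) (TT A))"
  shows "conv R (lift 0 (length \<Delta>) self_mem) (lift 0 (length \<Delta>) self_incl)"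
proof -
  let ?n = "length \<Delta>"
  have "conv R (lift 0 ?n self_mem) (App (lift 0 ?n below_russell) (lift 0 ?n (Sing A diag)))"
    using conv_AppL[OF match_intro[OF assms]] by (simp add: Mem_def diag_def)
  also have "conv R \<dots> (lift 0 ?n self_incl)"
    unfolding below_russell_def by simp (rule conv_beta, simp)
  finally show ?thesis .
qed

lemma conv_self_mem_self_incl: "conv R self_mem self_incl"
  using conv_self_mem[of "[]"] below_russell_type by simp

lemma self_mem_type: "hastype R \<Gamma> self_mem (Srt Star)"
  using hastype_Mem[OF A_type match_type diag_type diag_type] .

lemma Sing_diag_type: "hastype R \<Gamma> (Sing A diag) (Pow A)"
  using hastype_Sing[OF A_type diag_type] .

lemma self_incl_type: "hastype R \<Gamma> self_incl (Srt Star)"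
  using hastype_Incl[OF A_type Sing_diag_type russell_type] .

lemma self_incl_absurd: "\<exists>t. hastype R (self_incl # \<Gamma>) t bot"
proof -
  let ?D = "self_incl # \<Gamma>" and ?d = "lift 0 1 diag"
  let ?refl = "Leibniz_refl (lift 0 1 A) ?d"
  note incl = self_incl_type
  have d: "hastype R ?D ?d (lift 0 1 A)" using hastype.weak[OF diag_type incl] .
  have refl: "hastype R ?D ?refl (App (lift 0 1 (Sing A diag)) ?d)"
  proof (rule hastype.cnv)
    show "hastype R ?D ?refl (Leibniz_eq (lift 0 1 A) ?d ?d)"
      using hastype_Leibniz_refl[OF hastype_weak_Srt[OF A_type incl] d] .
    show "hastype R ?D (App (lift 0 1 (Sing A diag)) ?d) (Srt Star)"
      using hastype_app_Pow[OF hastype_weak_Pow[OF Sing_diag_type incl] d] .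
    show "conv R (Leibniz_eq (lift 0 1 A) ?d ?d) (App (lift 0 1 (Sing A diag)) ?d)"
      using conv_sym[OF conv_Sing_app] by simp
  qed
  have "hastype R ?D (Var 0) (Incl (lift 0 1 A) (lift 0 1 (Sing A diag)) (lift 0 1 russell))"
    using hastype.start[OF incl] by simp
  from hastype_Incl_elim[OF this d] refl
  have "hastype R ?D (App (App (Var 0) ?d) ?refl) (App (lift 0 1 russell) ?d)"
    by (rule hastype_app_arrow)
  then have not_mem: "hastype R ?D (App (App (Var 0) ?d) ?refl) (Neg (lift 0 1 self_mem))"
    by (rule hastype.cnv)
      (use hastype_Neg[OF hastype_weak_Srt[OF self_mem_type incl]] conv_russell_app[of 1] in simp_all)
  have mem: "hastype R ?D (Var 0) (lift 0 1 self_mem)"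
  proof (rule hastype.cnv)
    show "hastype R ?D (Var 0) (lift 0 1 self_incl)" using hastype.start[OF incl] .
    show "hastype R ?D (lift 0 1 self_mem) (Srt Star)"
      using hastype_weak_Srt[OF self_mem_type incl] .
    show "conv R (lift 0 1 self_incl) (lift 0 1 self_mem)"
      using conv_sym[OF conv_self_mem[of "[self_incl]"]] hastype.weak[OF below_russell_type incl] by simp
  qed
  show ?thesis using hastype_app_arrow[OF not_mem[unfolded Neg_def] mem] ..
qed

lemma not_self_mem_inhabited: "\<exists>f. hastype R \<Gamma> f (Neg self_mem)"
proof -
  obtain t where "hastype R (self_incl # \<Gamma>) t bot" using self_incl_absurd ..
  then have "hastype R \<Gamma> (Lam self_incl t) (Neg self_incl)"
    using hastype_lam_arrow[of R self_incl \<Gamma> t bot] hastype_Neg[OF self_incl_type] by (simp add: Neg_def)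
  then have "hastype R \<Gamma> (Lam self_incl t) (Neg self_mem)"
    using hastype.cnv hastype_Neg[OF self_mem_type] conv_Neg[OF conv_sym[OF conv_self_mem_self_incl]]
    by blast
  then show ?thesis ..
qed

lemma self_mem_inhabited: "\<exists>g. hastype R \<Gamma> g self_mem"
proof -
  obtain f where f: "hastype R \<Gamma> f (Neg self_mem)" using not_self_mem_inhabited ..
  let ?E = "App (lift 0 1 (Sing A diag)) (Var 0)"
  let ?D = "?E # A # \<Gamma>"
  have E: "hastype R (A # \<Gamma>) ?E (Srt Star)"
    using hastype_app_Pow[OF hastype_weak_Pow[OF Sing_diag_type A_type] hastype.start[OF A_type]] .
  have weak2: "hastype R ?D (lift 0 2 a) (lift 0 2 B)" if "hastype R \<Gamma> a B" for a B
    using hastype.weak[OF hastype.weak[OF that A_type] E] by (simp add: numeral_eq_Suc)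
  have x: "hastype R ?D (Var 1) (lift 0 2 A)"
    using hastype.weak[OF hastype.start[OF A_type] E] by (simp add: numeral_eq_Suc)
  have russell2: "hastype R ?D (lift 0 2 russell) (Pow (lift 0 2 A))"
    using weak2[OF russell_type] by simp
  have e: "hastype R ?D (Var 0) (Leibniz_eq (lift 0 2 A) (lift 0 2 diag) (Var 1))"
  proof (rule hastype.cnv)
    show "hastype R ?D (Var 0) (lift 0 1 ?E)" using hastype.start[OF E] .
    show "hastype R ?D (Leibniz_eq (lift 0 2 A) (lift 0 2 diag) (Var 1)) (Srt Star)"
      using hastype_Leibniz_eq[OF _ weak2[OF diag_type] x] weak2[OF A_type] by simp
    show "conv R (lift 0 1 ?E) (Leibniz_eq (lift 0 2 A) (lift 0 2 diag) (Var 1))"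
      using conv_Sing_app by (simp add: numeral_eq_Suc)
  qed
  have f2: "hastype R ?D (lift 0 2 f) (App (lift 0 2 russell) (lift 0 2 diag))"
  proof (rule hastype.cnv)
    show "hastype R ?D (lift 0 2 f) (Neg (lift 0 2 self_mem))" using weak2[OF f] by simp
    show "hastype R ?D (App (lift 0 2 russell) (lift 0 2 diag)) (Srt Star)"
      using hastype_app_Pow[OF russell2 weak2[OF diag_type]] .
    show "conv R (Neg (lift 0 2 self_mem)) (App (lift 0 2 russell) (lift 0 2 diag))"
      using conv_sym[OF conv_russell_app[of 2]] by simp
  qed
  have "hastype R ?D (App (App (Var 0) (lift 0 2 russell)) (lift 0 2 f)) (App (lift 0 2 russell) (Var 1))"
    using hastype_app_arrow[OF hastype_Leibniz_eq_elim[OF e russell2] f2] .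
  then have "hastype R \<Gamma> (Lam A (Lam ?E (App (App (Var 0) (lift 0 2 russell)) (lift 0 2 f)))) self_incl"
    by (rule hastype_Incl_intro[OF A_type Sing_diag_type russell_type])
  then show ?thesis
    using hastype.cnv self_mem_type conv_sym[OF conv_self_mem_self_incl] by blast
qed

lemma inconsistent: "\<exists>t. hastype R \<Gamma> t bot"
proof -
  obtain f where "hastype R \<Gamma> f (Neg self_mem)" using not_self_mem_inhabited ..
  moreover obtain g where "hastype R \<Gamma> g self_mem" using self_mem_inhabited ..
  ultimately show ?thesis unfolding Neg_def using hastype_app_arrow by blast
qed

end

theorem theorem1:
  fixes R :: "trm \<Rightarrow> trm \<Rightarrow> bool" and \<Gamma> :: "trm list" and A intro match :: trm
  assumes "hastype R \<Gamma> A (Srt Box)"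
    and "hastype R \<Gamma> intro (arrow (TT A) A)"
    and "hastype R \<Gamma> match (arrow A (TT A))"
    and "\<And>\<Delta> u. hastype R (\<Delta> @ \<Gamma>) u (lift 0 (length \<Delta>) (TT A)) \<Longrightarrow>
           conv R (App (lift 0 (length \<Delta>) match) (App (lift 0 (length \<Delta>) intro) u)) u"
  shows "\<exists>t. hastype R \<Gamma> t bot"
proof -
  interpret Pow_Pow_retract R \<Gamma> A intro match
    using assms by unfold_locales
  show ?thesis by (rule inconsistent)
qed

end
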